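(* Assume the standing hypotheses in the context. For every $(\tau,\xi)\in\mathbb{R}\times\mathbb{R}^n$, the system $$Z'(t)=A(t)Z(t)-f(t,X(t,\tau,\xi))$$ has a unique solution $h(t,(\tau,\xi))$ that is bounded on $\mathbb{R}$, and $\|h(t,(\tau,\xi))\|\le 2K\beta\alpha^{-1}$ for all $t\in\mathbb{R}$.
   Context: Standing hypotheses: $A:\mathbb{R}\to\mathbb{R}^{n\times n}$ is continuous and bounded, $T(t,s)$ is the evolution operator of $x'=A(t)x$. $\mu:\mathbb{R}\to(0,\infty)$ is an increasing differentiable growth rate: $\mu(0)=1$, $\lim_{t\to-\infty}\mu(t)=0$, $\lim_{t\to+\infty}\mu(t)=+\infty$. The system $x'=A(t)x$ admits an algebraic dichotomy: projections $P(s)$, $Q(s)=I-P(s)$, constants $K,\alpha>0$ with $T(t,s)P(s)=P(t)T(t,s)$, $\|T(t,s)P(s)\|\le K(\mu(t)/\mu(s))^{-\alpha}$ ($t\ge s$), $\|T(t,s)Q(s)\|\le K(\mu(s)/\mu(t))^{-\alpha}$ ($t\le s$). $f:\mathbb{R}\times\mathbb{R}^n\to\mathbb{R}^n$ is continuous, $\|f(t,x)\|\le\beta\mu'(t)\mu^{-1}(t)$, $\|f(t,x_1)-f(t,x_2)\|\le\gamma\mu'(t)\mu^{-1}(t)\|x_1-x_2\|$ for constants $\beta,\gamma\ge0$, and $6K\gamma\alpha^{-1}<1$. $X(t,\tau,\xi)$ denotes the solution of $x'=A(t)x+f(t,x)$ with $X(\tau)=\xi$. *)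

theory Defs
  imports "HOL-Analysis.Analysis"
begin

definition opnorm :: "real^'n^'n \<Rightarrow> real" where
  "opnorm M = onorm (\<lambda>x. M *v x)"

definition evolution_operator :: "(real \<Rightarrow> real^'n^'n) \<Rightarrow> (real \<Rightarrow> real \<Rightarrow> real^'n^'n) \<Rightarrow> bool" where
  "evolution_operator A T \<longleftrightarrow>
     (\<forall>s. T s s = mat 1 \<and> (\<forall>t. ((\<lambda>t. T t s) has_vector_derivative (A t ** T t s)) (at t)))"

definition growth_rate :: "(real \<Rightarrow> real) \<Rightarrow> bool" where
  "growth_rate \<mu> \<longleftrightarrow> mono \<mu> \<and> (\<forall>t. \<mu> t > 0) \<and> (\<forall>t. \<mu> differentiable (at t)) \<and>
     \<mu> 0 = 1 \<and> (\<mu> \<longlongrightarrow> 0) at_bot \<and> filterlim \<mu> at_top at_top"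

definition algebraic_dichotomy ::
  "(real \<Rightarrow> real \<Rightarrow> real^'n^'n) \<Rightarrow> (real \<Rightarrow> real) \<Rightarrow> (real \<Rightarrow> real^'n^'n) \<Rightarrow> real \<Rightarrow> real \<Rightarrow> bool" where
  "algebraic_dichotomy T \<mu> P K \<alpha> \<longleftrightarrow> K > 0 \<and> \<alpha> > 0 \<and>
     (\<forall>s. P s ** P s = P s) \<and>
     (\<forall>t s. T t s ** P s = P t ** T t s) \<and>
     (\<forall>t s. t \<ge> s \<longrightarrow> opnorm (T t s ** P s) \<le> K * (\<mu> t / \<mu> s) powr (-\<alpha>)) \<and>
     (\<forall>t s. t \<le> s \<longrightarrow> opnorm (T t s ** (mat 1 - P s)) \<le> K * (\<mu> s / \<mu> t) powr (-\<alpha>))"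

end

theory Submission
  imports Defs
begin

(*
  Write Q = I - P. If h' = A h - g, integrating s |-> T(t,s) P(s) g(s) over [r,t] gives
  P(t) h(t) = T(t,r) P(r) h(r) - int_r^t T(t,s) P(s) g(s) ds, and similarly for Q over [t,r].
  Because |g(s)| <= beta mu'(s)/mu(s), the dichotomy bound K (mu(s)/mu(t))^alpha |g(s)| is at most
  the derivative of (K beta/alpha) (mu(s)/mu(t))^alpha, so each of these integrals is at most
  K beta/alpha. For a bounded h the boundary terms T(t,r)P(r)h(r) and T(t,r)Q(r)h(r) vanish as
  r -> -oo resp. r -> +oo, which gives |h(t)| <= 2 K beta/alpha; applied with g = 0 to the
  difference of two bounded solutions this gives uniqueness. For existence, the same estimates
  show that for an arbitrary solution h0 the boundary terms converge, and subtracting a suitable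
  solution T(t,0)c of the homogeneous equation makes both limits zero.
*)

lemma norm_matrix_vector_mult_le:
  fixes M :: "real^'n^'m"
  shows "norm (M *v x) \<le> real CARD('m) * real CARD('n) * norm M * norm x"
proof -
  have "\<bar>M $ i $ j\<bar> \<le> norm M" for i j
    by (rule order_trans[OF component_le_norm_cart Finite_Cartesian_Product.norm_nth_le])
  then have "onorm ((*v) M) \<le> real CARD('m) * real CARD('n) * norm M"
    by (rule onorm_le_matrix_component)
  moreover have "norm (M *v x) \<le> onorm ((*v) M) * norm x"
    using onorm[OF matrix_vector_mul_bounded_linear] .
  ultimately show ?thesis
    by (meson mult_right_mono norm_ge_zero order_trans)
qed

lemma norm_matrix_vector_mult_le_opnorm: "norm (N *v v) \<le> opnorm N * norm v"
  unfolding opnorm_def using onorm[OF matrix_vector_mul_bounded_linear] .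

lemma bounded_bilinear_matrix_vector_mult:
  "bounded_bilinear (\<lambda>(M::real^'n^'m) (x::real^'n). M *v x)"
proof
  fix a a' :: "real^'n^'m" and b b' :: "real^'n" and r :: real
  show "(a + a') *v b = a *v b + a' *v b"
    by (rule matrix_vector_mult_add_rdistrib)
  show "a *v (b + b') = a *v b + a *v b'"
    by (rule matrix_vector_right_distrib)
  show "(r *\<^sub>R a) *v b = r *\<^sub>R (a *v b)"
    by (rule scaleR_matrix_vector_assoc[symmetric])
  show "a *v (r *\<^sub>R b) = r *\<^sub>R (a *v b)"
    by (rule matrix_vector_mult_scaleR)
next
  have "norm (a *v b) \<le> norm a * norm b * (real CARD('m) * real CARD('n))"
    for a :: "real^'n^'m" and b :: "real^'n"
    using norm_matrix_vector_mult_le[of a b] by (simp add: ac_simps)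
  then show "\<exists>K. \<forall>a b. norm ((a::real^'n^'m) *v (b::real^'n)) \<le> norm a * norm b * K"
    by blast
qed

lemma bounded_range_imp_matrix_vector_bound:
  fixes A :: "'a \<Rightarrow> real^'n^'n"
  assumes "bounded (range A)"
  obtains M where "\<And>t v. norm (A t *v v) \<le> M * norm v"
proof -
  obtain B where B: "\<And>t. norm (A t) \<le> B"
    using assms unfolding bounded_iff by blast
  have "norm (A t *v v) \<le> real CARD('n) * real CARD('n) * B * norm v" for t v
  proof -
    have "norm (A t *v v) \<le> real CARD('n) * real CARD('n) * norm (A t) * norm v"
      by (rule norm_matrix_vector_mult_le)
    also have "\<dots> \<le> real CARD('n) * real CARD('n) * B * norm v"
      using B[of t] by (intro mult_right_mono mult_left_mono) auto
    finally show ?thesis .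
  qed
  then show thesis by (rule that)
qed

lemma norm_le_exp_if_derivative_bounded_forward:
  fixes x :: "real \<Rightarrow> 'a::real_inner"
  assumes x: "\<And>t. (x has_vector_derivative x' t) (at t)"
    and bound: "\<And>t. norm (x' t) \<le> M * norm (x t)"
    and "s \<le> t"
  shows "norm (x t) \<le> exp (M * (t - s)) * norm (x s)"
proof -
  define q where "q u = exp (-2 * M * u) * (x u \<bullet> x u)" for u
  have q_deriv: "(q has_real_derivative 2 * exp (-2 * M * u) * (x u \<bullet> x' u - M * (x u \<bullet> x u))) (at u)"
    for u
  proof -
    have "((\<lambda>u. x u \<bullet> x u) has_real_derivative x u \<bullet> x' u + x' u \<bullet> x u) (at u)"
      using bounded_bilinear.has_vector_derivative[OF bounded_bilinear_inner x x]
      by (simp add: has_real_derivative_iff_has_vector_derivative)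
    then show ?thesis
      unfolding q_def by (auto intro!: derivative_eq_intros simp: inner_commute algebra_simps)
  qed
  have inner_le: "x u \<bullet> x' u \<le> M * (x u \<bullet> x u)" for u
  proof -
    have "x u \<bullet> x' u \<le> norm (x u) * norm (x' u)"
      by (rule norm_cauchy_schwarz)
    also have "\<dots> \<le> norm (x u) * (M * norm (x u))"
      by (simp add: bound mult_left_mono)
    finally show ?thesis
      by (simp add: dot_square_norm power2_eq_square algebra_simps)
  qed
  have "q t \<le> q s"
  proof (rule DERIV_nonpos_imp_nonincreasing[OF \<open>s \<le> t\<close>])
    fix u
    have "2 * exp (-2 * M * u) * (x u \<bullet> x' u - M * (x u \<bullet> x u)) \<le> 0"
      using inner_le[of u] by (intro mult_nonneg_nonpos) auto
    then show "\<exists>y. (q has_real_derivative y) (at u) \<and> y \<le> 0"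
      using q_deriv by blast
  qed
  then have "exp (2 * M * t) * q t \<le> exp (2 * M * t) * q s"
    by simp
  then have "(norm (x t))\<^sup>2 \<le> exp (2 * (M * (t - s))) * (norm (x s))\<^sup>2"
    by (simp add: q_def dot_square_norm mult.assoc[symmetric] flip: exp_add) (simp add: algebra_simps)
  also have "\<dots> = (exp (M * (t - s)) * norm (x s))\<^sup>2"
    by (simp add: power_mult_distrib exp_double)
  finally show ?thesis
    by (rule power2_le_imp_le) simp
qed

lemma norm_le_exp_if_derivative_bounded:
  fixes x :: "real \<Rightarrow> 'a::real_inner"
  assumes x: "\<And>t. (x has_vector_derivative x' t) (at t)"
    and bound: "\<And>t. norm (x' t) \<le> M * norm (x t)"
  shows "norm (x t) \<le> exp (M * \<bar>t - s\<bar>) * norm (x s)"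
proof (cases "s \<le> t")
  case True
  then show ?thesis
    using norm_le_exp_if_derivative_bounded_forward[OF x bound] by simp
next
  case False
  have mirror: "((\<lambda>u. x (- u)) has_vector_derivative - x' (- u)) (at u)" for u
    using vector_diff_chain_at[OF has_vector_derivative_minus[OF has_vector_derivative_id] x]
    by (simp add: o_def)
  have "norm ((\<lambda>u. x (- u)) (- t)) \<le> exp (M * (- t - - s)) * norm ((\<lambda>u. x (- u)) (- s))"
    by (rule norm_le_exp_if_derivative_bounded_forward[where x' = "\<lambda>u. - x' (- u)"]) (use mirror bound False in auto)
  then show ?thesis
    using False by simp
qed

lemma Cauchy_modulus_imp_convergent_at_top:
  fixes I :: "real \<Rightarrow> 'a::banach"
  assumes modulus: "\<And>a b. c \<le> a \<Longrightarrow> a \<le> b \<Longrightarrow> norm (I b - I a) \<le> \<phi> a"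
    and \<phi>: "(\<phi> \<longlongrightarrow> 0) at_top"
  obtains L where "(I \<longlongrightarrow> L) at_top"
proof -
  have "cauchy_filter (filtermap I at_top)"
    unfolding cauchy_filter_metric_filtermap
  proof (intro allI impI)
    fix e :: real
    assume "e > 0"
    have "\<forall>\<^sub>F a in at_top. c \<le> a \<and> \<phi> a < e / 2"
      using eventually_ge_at_top order_tendstoD(2)[OF \<phi>, of "e / 2"] \<open>e > 0\<close>
      by (intro eventually_conj) auto
    then obtain a where a: "c \<le> a" "\<phi> a < e / 2"
      unfolding eventually_at_top_linorder by blast
    have "dist (I x) (I y) < e" if "a \<le> x" "a \<le> y" for x y
    proof -
      have "dist (I x) (I y) \<le> norm (I x - I a) + norm (I y - I a)"
        using dist_triangle2[of "I x" "I y" "I a"] by (simp add: dist_norm)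
      also have "\<dots> \<le> \<phi> a + \<phi> a"
        using modulus a(1) that by (intro add_mono) auto
      finally show ?thesis
        using a(2) by simp
    qed
    then show "\<exists>P. eventually P at_top \<and> (\<forall>x y. P x \<and> P y \<longrightarrow> dist (I x) (I y) < e)"
      by (intro exI[of _ "\<lambda>x. a \<le> x"]) (auto intro: eventually_ge_at_top)
  qed
  then have "convergent_filter (filtermap I at_top)"
    by (rule cauchy_filter_convergent)
  then show thesis
    using that unfolding convergent_filter_iff filterlim_def by blast
qed

lemma has_integral_norm_le_antiderivative:
  fixes F :: "real \<Rightarrow> 'a::banach"
  assumes F: "(F has_integral V) {a..b}" and "a \<le> b"
    and bound: "\<And>s. s \<in> {a..b} \<Longrightarrow> norm (F s) \<le> \<phi> s"
    and \<Phi>: "\<And>s. s \<in> {a..b} \<Longrightarrow> (\<Phi> has_real_derivative \<phi> s) (at s)"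
  shows "norm V \<le> \<Phi> b - \<Phi> a"
proof -
  have "(\<phi> has_integral \<Phi> b - \<Phi> a) {a..b}"
    using \<open>a \<le> b\<close> \<Phi> by (intro fundamental_theorem_of_calculus)
      (auto simp flip: has_real_derivative_iff_has_vector_derivative intro: DERIV_subset)
  with integral_norm_bound_integral[OF has_integral_integrable[OF F] _ bound] F
  show ?thesis
    by (auto simp: integral_unique has_integral_integrable)
qed

locale linear_ode =
  fixes A :: "real \<Rightarrow> real^'n^'n" and T :: "real \<Rightarrow> real \<Rightarrow> real^'n^'n" and M :: real
  assumes evolution: "evolution_operator A T"
    and coefficient_bound: "\<And>t v. norm (A t *v v) \<le> M * norm v"
begin

lemma evolution_same [simp]: "T s s = mat 1"
  using evolution unfolding evolution_operator_def by blast

lemma has_vector_derivative_evolution: "((\<lambda>t. T t s) has_vector_derivative A t ** T t s) (at t)"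
  using evolution unfolding evolution_operator_def by blast

lemma has_vector_derivative_evolution_apply:
  "((\<lambda>t. T t s *v v) has_vector_derivative A t *v (T t s *v v)) (at t)"
proof -
  have "bounded_linear (\<lambda>N :: real^'n^'n. N *v v)"
    by (rule bounded_bilinear.bounded_linear_left[OF bounded_bilinear_matrix_vector_mult])
  from bounded_linear.has_vector_derivative[OF this has_vector_derivative_evolution]
  show ?thesis
    by (simp add: matrix_vector_mul_assoc)
qed

lemma norm_homogeneous_solution_le:
  assumes "\<And>t. (x has_vector_derivative A t *v x t) (at t)"
  shows "norm (x t) \<le> exp (M * \<bar>t - s\<bar>) * norm (x s)"
  using assms coefficient_bound by (rule norm_le_exp_if_derivative_bounded)

lemma homogeneous_solution_eq_0:
  assumes "\<And>t. (x has_vector_derivative A t *v x t) (at t)" and "x s = 0"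
  shows "x t = 0"
  using norm_homogeneous_solution_le[OF assms(1), of t s] assms(2) by simp

lemma evolution_cocycle: "T t r *v (T r s *v v) = T t s *v v"
proof -
  define y where "y t = T t s *v v - T t r *v (T r s *v v)" for t
  have "y t = 0"
  proof (rule homogeneous_solution_eq_0)
    show "(y has_vector_derivative A u *v y u) (at u)" for u
      unfolding y_def
      using has_vector_derivative_diff[OF has_vector_derivative_evolution_apply
          has_vector_derivative_evolution_apply]
      by (simp add: matrix_vector_mult_diff_distrib)
    show "y r = 0"
      by (simp add: y_def)
  qed
  then show ?thesis
    by (simp add: y_def)
qed

lemma norm_evolution_apply_le: "norm (T t s *v v) \<le> exp (M * \<bar>t - s\<bar>) * norm v"
  using norm_homogeneous_solution_le[OF has_vector_derivative_evolution_apply[of s v], of t s] by simp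

lemma continuous_on_evolution_apply:
  assumes g: "continuous_on UNIV g"
  shows "continuous_on UNIV (\<lambda>s. T t s *v g s)"
proof -
  have "isCont (\<lambda>s. T t s *v g s) x" for x
  proof -
    have "isCont (\<lambda>y. T y x *v g x) x"
      using has_vector_derivative_continuous[OF has_vector_derivative_evolution_apply] .
    then have "((\<lambda>y. g y - T y x *v g x) \<longlongrightarrow> g x - g x) (at x)"
      using g by (intro tendsto_diff) (auto simp: isCont_def continuous_on_def)
    then have "((\<lambda>y. exp (M * \<bar>t - y\<bar>) * norm (g y - T y x *v g x)) \<longlongrightarrow> exp (M * \<bar>t - x\<bar>) * 0) (at x)"
      by (intro tendsto_intros) (auto intro: tendsto_norm_zero)
    moreover have "\<forall>y. norm (T t y *v g y - T t x *v g x) \<le> exp (M * \<bar>t - y\<bar>) * norm (g y - T y x *v g x)"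
    proof
      fix y
      show "norm (T t y *v g y - T t x *v g x) \<le> exp (M * \<bar>t - y\<bar>) * norm (g y - T y x *v g x)"
        using norm_evolution_apply_le[of t y "g y - T y x *v g x"]
        by (simp add: matrix_vector_mult_diff_distrib evolution_cocycle)
    qed
    ultimately have "((\<lambda>y. T t y *v g y - T t x *v g x) \<longlongrightarrow> 0) (at x)"
      using Lim_null_comparison[OF always_eventually] by simp
    then show ?thesis
      unfolding isCont_def by (rule LIM_zero_cancel)
  qed
  then show ?thesis
    by (simp add: continuous_at_imp_continuous_on)
qed

lemma evolution_antiderivative_exists:
  assumes "continuous_on UNIV g"
  obtains G where "\<And>s. (G has_vector_derivative T 0 s *v g s) (at s)"
proof -
  have "isCont (\<lambda>s. T 0 s *v g s) s" for s
    using continuous_on_evolution_apply[OF assms] by (simp add: continuous_on_eq_continuous_at)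
  then obtain G where "\<forall>s::real. -\<infinity> < s \<longrightarrow> s < \<infinity> \<longrightarrow> (G has_vector_derivative T 0 s *v g s) (at s)"
    using einterval_antiderivative[of "-\<infinity>" "\<infinity>" "\<lambda>s. T 0 s *v g s"] by auto
  then show thesis
    by (intro that[of G]) simp
qed

lemma variation_of_constants_has_derivative:
  assumes "(G has_vector_derivative T s t *v g t) (at t)"
  shows "((\<lambda>t. T t s *v (c - G t)) has_vector_derivative A t *v (T t s *v (c - G t)) - g t) (at t)"
proof -
  have "((\<lambda>t. c - G t) has_vector_derivative - (T s t *v g t)) (at t)"
    using assms by (auto intro!: derivative_eq_intros)
  from bounded_bilinear.has_vector_derivative[OF bounded_bilinear_matrix_vector_mult
      has_vector_derivative_evolution this]
  have "((\<lambda>t. T t s *v (c - G t)) has_vector_derivative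
      T t s *v - (T s t *v g t) + (A t ** T t s) *v (c - G t)) (at t)" .
  moreover have "T t s *v - (T s t *v g t) = - g t"
    using evolution_cocycle[of t s t "g t"] matrix_vector_mult_diff_distrib[of "T t s" 0 "T s t *v g t"]
    by simp
  ultimately show ?thesis
    by (simp add: matrix_vector_mul_assoc)
qed

lemma solution_exists:
  assumes "continuous_on UNIV g"
  shows "\<exists>h. \<forall>t. (h has_vector_derivative A t *v h t - g t) (at t)"
proof -
  obtain G where "\<And>s. (G has_vector_derivative T 0 s *v g s) (at s)"
    using evolution_antiderivative_exists[OF assms] by blast
  then have "((\<lambda>t. T t 0 *v (0 - G t)) has_vector_derivative A t *v (T t 0 *v (0 - G t)) - g t) (at t)" for t
    by (rule variation_of_constants_has_derivative[where g = g])
  then show ?thesis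
    by blast
qed

lemma variation_of_constants:
  assumes h: "\<And>t. (h has_vector_derivative A t *v h t - g t) (at t)"
    and G: "\<And>t. (G has_vector_derivative T 0 t *v g t) (at t)"
  shows "h t = T t 0 *v (h 0 + G 0 - G t)"
proof -
  define y where "y t = h t - T t 0 *v (h 0 + G 0 - G t)" for t
  have "y t = 0"
  proof (rule homogeneous_solution_eq_0)
    show "(y has_vector_derivative A u *v y u) (at u)" for u
      unfolding y_def
      using has_vector_derivative_diff[OF h[of u]
          variation_of_constants_has_derivative[where g = g and s = 0, OF G[of u], of "h 0 + G 0"]]
      by (simp add: algebra_simps)
    show "y 0 = 0"
      by (simp add: y_def)
  qed
  then show ?thesis
    by (simp add: y_def)
qed

lemma solution_has_integral:
  assumes g: "continuous_on UNIV g"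
    and h: "\<And>t. (h has_vector_derivative A t *v h t - g t) (at t)" and "a \<le> b"
  shows "((\<lambda>s. T t s *v g s) has_integral T t a *v h a - T t b *v h b) {a..b}"
proof -
  obtain G where G: "\<And>s. (G has_vector_derivative T 0 s *v g s) (at s)"
    using evolution_antiderivative_exists[OF g] by blast
  have "((\<lambda>s. T 0 s *v g s) has_integral G b - G a) {a..b}"
    using \<open>a \<le> b\<close> G by (intro fundamental_theorem_of_calculus) (auto intro: has_vector_derivative_at_within)
  from has_integral_linear[OF this matrix_vector_mul_bounded_linear[of "T t 0"]]
  have "((\<lambda>s. T t s *v g s) has_integral T t 0 *v (G b - G a)) {a..b}"
    by (simp add: o_def evolution_cocycle)
  moreover have h_eq: "T t c *v h c = T t 0 *v (h 0 + G 0 - G c)" for c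
    using variation_of_constants[OF h G, of c] by (simp add: evolution_cocycle)
  have "T t a *v h a - T t b *v h b = T t 0 *v (G b - G a)"
    unfolding h_eq[of a] h_eq[of b] by (simp add: algebra_simps)
  ultimately show ?thesis
    by simp
qed

end

(* The complementary projection Q(s) = I - P(s) is written out as v - P s *v v. *)
locale dichotomic_linear_ode = linear_ode A T M for A :: "real \<Rightarrow> real^'n^'n" and T M +
  fixes P :: "real \<Rightarrow> real^'n^'n" and \<mu> :: "real \<Rightarrow> real" and K \<alpha> :: real
  assumes growth_rate: "growth_rate \<mu>"
    and dichotomy: "algebraic_dichotomy T \<mu> P K \<alpha>"
begin

lemma K_pos: "K > 0" and alpha_pos: "\<alpha> > 0"
  using dichotomy unfolding algebraic_dichotomy_def by auto

lemma mu_pos: "\<mu> t > 0"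
  using growth_rate unfolding growth_rate_def by auto

lemma mu_has_derivative: "(\<mu> has_real_derivative deriv \<mu> t) (at t)"
  using growth_rate unfolding growth_rate_def by (auto simp: DERIV_deriv_iff_real_differentiable)

lemma projection_idem: "P s *v (P s *v v) = P s *v v"
  using dichotomy unfolding algebraic_dichotomy_def by (simp add: matrix_vector_mul_assoc)

lemma evolution_projection_commute: "T t s *v (P s *v v) = P t *v (T t s *v v)"
  using dichotomy unfolding algebraic_dichotomy_def by (simp add: matrix_vector_mul_assoc)

lemma norm_stable_part_le:
  assumes "s \<le> t"
  shows "norm (T t s *v (P s *v v)) \<le> K * (\<mu> s / \<mu> t) powr \<alpha> * norm v"
proof -
  have "norm (T t s *v (P s *v v)) \<le> opnorm (T t s ** P s) * norm v"
    using norm_matrix_vector_mult_le_opnorm[of "T t s ** P s" v] by (simp add: matrix_vector_mul_assoc)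
  also have "\<dots> \<le> K * (\<mu> t / \<mu> s) powr (- \<alpha>) * norm v"
    using dichotomy assms unfolding algebraic_dichotomy_def by (intro mult_right_mono) auto
  also have "(\<mu> t / \<mu> s) powr (- \<alpha>) = (\<mu> s / \<mu> t) powr \<alpha>"
    by (simp add: powr_divide powr_minus_divide)
  finally show ?thesis .
qed

lemma norm_unstable_part_le:
  assumes "t \<le> s"
  shows "norm (T t s *v (v - P s *v v)) \<le> K * (\<mu> s / \<mu> t) powr (- \<alpha>) * norm v"
proof -
  have "norm (T t s *v (v - P s *v v)) \<le> opnorm (T t s ** (mat 1 - P s)) * norm v"
    using norm_matrix_vector_mult_le_opnorm[of "T t s ** (mat 1 - P s)" v]
    by (simp add: matrix_vector_mul_assoc[symmetric] matrix_vector_mult_diff_rdistrib)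
  also have "\<dots> \<le> K * (\<mu> s / \<mu> t) powr (- \<alpha>) * norm v"
    using dichotomy assms unfolding algebraic_dichotomy_def by (intro mult_right_mono) auto
  finally show ?thesis .
qed

lemma mu_ratio_powr_has_derivative:
  assumes "c > 0"
  shows "((\<lambda>s. (\<mu> s / c) powr e) has_real_derivative e * (\<mu> s / c) powr e * (deriv \<mu> s / \<mu> s)) (at s)"
proof -
  have pos: "\<mu> s / c > 0"
    using mu_pos assms by simp
  have "((\<lambda>s. (\<mu> s / c) powr e) has_real_derivative e * (\<mu> s / c) powr (e - 1) * (deriv \<mu> s / c)) (at s)"
    using DERIV_fun_powr[OF DERIV_cdivide[OF mu_has_derivative] pos] by simp
  moreover have "e * (\<mu> s / c) powr (e - 1) * (deriv \<mu> s / c) = e * (\<mu> s / c) powr e * (deriv \<mu> s / \<mu> s)"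
    using pos assms by (simp add: powr_diff field_simps)
  ultimately show ?thesis
    by (rule DERIV_cong)
qed

lemma mu_ratio_powr_tendsto_at_bot:
  assumes "c > 0"
  shows "((\<lambda>r. (\<mu> r / c) powr \<alpha>) \<longlongrightarrow> 0) at_bot"
proof (rule tendsto_zero_powrI)
  show "((\<lambda>r. \<mu> r / c) \<longlongrightarrow> 0) at_bot"
    using growth_rate unfolding growth_rate_def by (intro tendsto_divide_zero) auto
  have "0 \<le> \<mu> r / c" for r
    using mu_pos[of r] assms by simp
  then show "\<forall>\<^sub>F r in at_bot. 0 \<le> \<mu> r / c"
    by simp
qed (use alpha_pos in auto)

lemma mu_ratio_powr_tendsto_at_top:
  assumes "c > 0"
  shows "((\<lambda>r. (\<mu> r / c) powr (- \<alpha>)) \<longlongrightarrow> 0) at_top"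
proof -
  have "((\<lambda>r. c / \<mu> r) \<longlongrightarrow> 0) at_top"
    using growth_rate unfolding growth_rate_def
    by (intro tendsto_divide_0[OF tendsto_const] filterlim_at_top_imp_at_infinity) auto
  moreover have "0 \<le> c / \<mu> r" for r
    using mu_pos[of r] assms by simp
  ultimately have "((\<lambda>r. (c / \<mu> r) powr \<alpha>) \<longlongrightarrow> 0) at_top"
    using alpha_pos by (intro tendsto_zero_powrI) auto
  then show ?thesis
    by (simp add: powr_divide powr_minus_divide)
qed

lemma stable_part_has_integral:
  assumes g: "continuous_on UNIV g"
    and h: "\<And>t. (h has_vector_derivative A t *v h t - g t) (at t)" and "a \<le> b"
  shows "((\<lambda>s. T t s *v (P s *v g s)) has_integral
           T t a *v (P a *v h a) - T t b *v (P b *v h b)) {a..b}"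
  using has_integral_linear[OF solution_has_integral[OF g h \<open>a \<le> b\<close>]
      matrix_vector_mul_bounded_linear[of "P t"]]
  by (simp add: o_def evolution_projection_commute matrix_vector_mult_diff_distrib)

lemma unstable_part_has_integral:
  assumes g: "continuous_on UNIV g"
    and h: "\<And>t. (h has_vector_derivative A t *v h t - g t) (at t)" and "a \<le> b"
  shows "((\<lambda>s. T t s *v (g s - P s *v g s)) has_integral
           T t a *v (h a - P a *v h a) - T t b *v (h b - P b *v h b)) {a..b}"
  using has_integral_diff[OF solution_has_integral[OF g h \<open>a \<le> b\<close>]
      stable_part_has_integral[OF g h \<open>a \<le> b\<close>]]
  by (simp add: matrix_vector_mult_diff_distrib algebra_simps)

lemma norm_integral_le_mu_powr:
  fixes F :: "real \<Rightarrow> 'a::banach"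
  assumes F: "(F has_integral V) {a..b}" and "a \<le> b" and "e \<noteq> 0"
    and bound: "\<And>s. s \<in> {a..b} \<Longrightarrow> norm (F s) \<le> K * (\<mu> s / \<mu> t) powr e * (\<beta> * deriv \<mu> s / \<mu> s)"
  shows "norm V \<le> K * \<beta> / e * ((\<mu> b / \<mu> t) powr e - (\<mu> a / \<mu> t) powr e)"
proof -
  have "((\<lambda>s. K * \<beta> / e * (\<mu> s / \<mu> t) powr e) has_real_derivative
      K * (\<mu> s / \<mu> t) powr e * (\<beta> * deriv \<mu> s / \<mu> s)) (at s)" if "s \<in> {a..b}" for s
    by (rule DERIV_cong[OF DERIV_cmult[OF mu_ratio_powr_has_derivative[OF mu_pos[of t]]]])
      (use \<open>e \<noteq> 0\<close> in simp)
  from has_integral_norm_le_antiderivative[OF F \<open>a \<le> b\<close> bound this]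
  show ?thesis
    by (simp add: right_diff_distrib)
qed

lemma stable_part_shift:
  "T t r *v (P r *v (x - T r 0 *v c)) = T t 0 *v (P 0 *v (T 0 r *v (P r *v x) - c))"
  by (simp add: matrix_vector_mult_diff_distrib evolution_projection_commute[symmetric]
      projection_idem evolution_cocycle)

lemma unstable_part_shift:
  "T t r *v ((x - T r 0 *v c) - P r *v (x - T r 0 *v c))
     = T t 0 *v ((T 0 r *v (x - P r *v x) - c) - P 0 *v (T 0 r *v (x - P r *v x) - c))"
  by (simp add: algebra_simps evolution_projection_commute[symmetric] projection_idem evolution_cocycle)

context
  fixes g :: "real \<Rightarrow> real^'n" and \<beta> :: real
  assumes g: "continuous_on UNIV g"
    and g_bound: "\<And>s. norm (g s) \<le> \<beta> * deriv \<mu> s / \<mu> s"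
    and \<beta>: "\<beta> \<ge> 0"
begin

lemma stable_increment_le:
  assumes h: "\<And>t. (h has_vector_derivative A t *v h t - g t) (at t)"
    and "a \<le> b" "b \<le> t"
  shows "norm (T t b *v (P b *v h b) - T t a *v (P a *v h a)) \<le> K * \<beta> / \<alpha> * (\<mu> b / \<mu> t) powr \<alpha>"
proof -
  have "norm (T t a *v (P a *v h a) - T t b *v (P b *v h b))
      \<le> K * \<beta> / \<alpha> * ((\<mu> b / \<mu> t) powr \<alpha> - (\<mu> a / \<mu> t) powr \<alpha>)"
  proof (rule norm_integral_le_mu_powr[OF stable_part_has_integral[OF g h \<open>a \<le> b\<close>] \<open>a \<le> b\<close>])
    show "\<alpha> \<noteq> 0"
      using alpha_pos by simp
    fix s
    assume "s \<in> {a..b}"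
    then have "norm (T t s *v (P s *v g s)) \<le> K * (\<mu> s / \<mu> t) powr \<alpha> * norm (g s)"
      using \<open>b \<le> t\<close> by (intro norm_stable_part_le) auto
    also have "\<dots> \<le> K * (\<mu> s / \<mu> t) powr \<alpha> * (\<beta> * deriv \<mu> s / \<mu> s)"
      using g_bound K_pos by (intro mult_left_mono) auto
    finally show "norm (T t s *v (P s *v g s)) \<le> K * (\<mu> s / \<mu> t) powr \<alpha> * (\<beta> * deriv \<mu> s / \<mu> s)" .
  qed
  also have "\<dots> \<le> K * \<beta> / \<alpha> * (\<mu> b / \<mu> t) powr \<alpha>"
    using K_pos alpha_pos \<open>\<beta> \<ge> 0\<close> by (intro mult_left_mono) auto
  finally show ?thesis
    by (simp add: norm_minus_commute)
qed

lemma unstable_increment_le: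
  assumes h: "\<And>t. (h has_vector_derivative A t *v h t - g t) (at t)"
    and "t \<le> a" "a \<le> b"
  shows "norm (T t a *v (h a - P a *v h a) - T t b *v (h b - P b *v h b))
           \<le> K * \<beta> / \<alpha> * (\<mu> a / \<mu> t) powr (- \<alpha>)"
proof -
  have "norm (T t a *v (h a - P a *v h a) - T t b *v (h b - P b *v h b))
      \<le> K * \<beta> / (- \<alpha>) * ((\<mu> b / \<mu> t) powr (- \<alpha>) - (\<mu> a / \<mu> t) powr (- \<alpha>))"
  proof (rule norm_integral_le_mu_powr[OF unstable_part_has_integral[OF g h \<open>a \<le> b\<close>] \<open>a \<le> b\<close>])
    show "- \<alpha> \<noteq> 0"
      using alpha_pos by simp
    fix s
    assume "s \<in> {a..b}"
    then have "norm (T t s *v (g s - P s *v g s)) \<le> K * (\<mu> s / \<mu> t) powr (- \<alpha>) * norm (g s)"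
      using \<open>t \<le> a\<close> by (intro norm_unstable_part_le) auto
    also have "\<dots> \<le> K * (\<mu> s / \<mu> t) powr (- \<alpha>) * (\<beta> * deriv \<mu> s / \<mu> s)"
      using g_bound K_pos by (intro mult_left_mono) auto
    finally show "norm (T t s *v (g s - P s *v g s)) \<le> K * (\<mu> s / \<mu> t) powr (- \<alpha>) * (\<beta> * deriv \<mu> s / \<mu> s)" .
  qed
  also have "\<dots> = K * \<beta> / \<alpha> * ((\<mu> a / \<mu> t) powr (- \<alpha>) - (\<mu> b / \<mu> t) powr (- \<alpha>))"
    by (simp add: divide_minus_right algebra_simps)
  also have "\<dots> \<le> K * \<beta> / \<alpha> * (\<mu> a / \<mu> t) powr (- \<alpha>)"
    using K_pos alpha_pos \<open>\<beta> \<ge> 0\<close> by (intro mult_left_mono) auto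
  finally show ?thesis .
qed

lemma norm_solution_le_if_tails_vanish:
  assumes h: "\<And>t. (h has_vector_derivative A t *v h t - g t) (at t)"
    and stable_tail: "((\<lambda>r. T t r *v (P r *v h r)) \<longlongrightarrow> 0) at_bot"
    and unstable_tail: "((\<lambda>r. T t r *v (h r - P r *v h r)) \<longlongrightarrow> 0) at_top"
  shows "norm (h t) \<le> 2 * K * \<beta> / \<alpha>"
proof -
  have "norm (P t *v h t) \<le> K * \<beta> / \<alpha>"
  proof (rule Lim_norm_ubound)
    show "((\<lambda>r. P t *v h t - T t r *v (P r *v h r)) \<longlongrightarrow> P t *v h t) at_bot"
      using tendsto_diff[OF tendsto_const stable_tail] by simp
    show "\<forall>\<^sub>F r in at_bot. norm (P t *v h t - T t r *v (P r *v h r)) \<le> K * \<beta> / \<alpha>"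
      using eventually_le_at_bot[of t]
    proof (rule eventually_mono)
      fix r
      assume "r \<le> t"
      from stable_increment_le[OF h this order_refl]
      show "norm (P t *v h t - T t r *v (P r *v h r)) \<le> K * \<beta> / \<alpha>"
        using mu_pos[of t] by simp
    qed
  qed simp
  moreover have "norm (h t - P t *v h t) \<le> K * \<beta> / \<alpha>"
  proof (rule Lim_norm_ubound)
    show "((\<lambda>r. (h t - P t *v h t) - T t r *v (h r - P r *v h r)) \<longlongrightarrow> h t - P t *v h t) at_top"
      using tendsto_diff[OF tendsto_const unstable_tail] by simp
    show "\<forall>\<^sub>F r in at_top. norm ((h t - P t *v h t) - T t r *v (h r - P r *v h r)) \<le> K * \<beta> / \<alpha>"
      using eventually_ge_at_top[of t]
    proof (rule eventually_mono)
      fix r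
      assume "t \<le> r"
      from unstable_increment_le[OF h order_refl this]
      show "norm ((h t - P t *v h t) - T t r *v (h r - P r *v h r)) \<le> K * \<beta> / \<alpha>"
        using mu_pos[of t] by simp
    qed
  qed simp
  moreover have "norm (h t) \<le> norm (P t *v h t) + norm (h t - P t *v h t)"
    using norm_triangle_ineq[of "P t *v h t" "h t - P t *v h t"] by simp
  ultimately show ?thesis
    by simp
qed

lemma bounded_solution_norm_le:
  assumes h: "\<And>t. (h has_vector_derivative A t *v h t - g t) (at t)" and "bounded (range h)"
  shows "norm (h t) \<le> 2 * K * \<beta> / \<alpha>"
proof (rule norm_solution_le_if_tails_vanish[OF h])
  obtain B where B: "\<And>r. norm (h r) \<le> B"
    using \<open>bounded (range h)\<close> unfolding bounded_iff by blast
  show "((\<lambda>r. T t r *v (P r *v h r)) \<longlongrightarrow> 0) at_bot"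
  proof (rule Lim_null_comparison)
    show "\<forall>\<^sub>F r in at_bot. norm (T t r *v (P r *v h r)) \<le> K * (\<mu> r / \<mu> t) powr \<alpha> * B"
      using eventually_le_at_bot[of t]
    proof (rule eventually_mono)
      fix r
      assume "r \<le> t"
      then have "norm (T t r *v (P r *v h r)) \<le> K * (\<mu> r / \<mu> t) powr \<alpha> * norm (h r)"
        by (rule norm_stable_part_le)
      also have "\<dots> \<le> K * (\<mu> r / \<mu> t) powr \<alpha> * B"
        using K_pos B by (intro mult_left_mono) auto
      finally show "norm (T t r *v (P r *v h r)) \<le> K * (\<mu> r / \<mu> t) powr \<alpha> * B" .
    qed
    show "((\<lambda>r. K * (\<mu> r / \<mu> t) powr \<alpha> * B) \<longlongrightarrow> 0) at_bot"
      using tendsto_mult[OF tendsto_mult[OF tendsto_const mu_ratio_powr_tendsto_at_bot[OF mu_pos]] tendsto_const]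
      by simp
  qed
  show "((\<lambda>r. T t r *v (h r - P r *v h r)) \<longlongrightarrow> 0) at_top"
  proof (rule Lim_null_comparison)
    show "\<forall>\<^sub>F r in at_top. norm (T t r *v (h r - P r *v h r)) \<le> K * (\<mu> r / \<mu> t) powr (- \<alpha>) * B"
      using eventually_ge_at_top[of t]
    proof (rule eventually_mono)
      fix r
      assume "t \<le> r"
      then have "norm (T t r *v (h r - P r *v h r)) \<le> K * (\<mu> r / \<mu> t) powr (- \<alpha>) * norm (h r)"
        by (rule norm_unstable_part_le)
      also have "\<dots> \<le> K * (\<mu> r / \<mu> t) powr (- \<alpha>) * B"
        using K_pos B by (intro mult_left_mono) auto
      finally show "norm (T t r *v (h r - P r *v h r)) \<le> K * (\<mu> r / \<mu> t) powr (- \<alpha>) * B" .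
    qed
    show "((\<lambda>r. K * (\<mu> r / \<mu> t) powr (- \<alpha>) * B) \<longlongrightarrow> 0) at_top"
      using tendsto_mult[OF tendsto_mult[OF tendsto_const mu_ratio_powr_tendsto_at_top[OF mu_pos]] tendsto_const]
      by simp
  qed
qed

lemma stable_tail_convergent:
  assumes h: "\<And>t. (h has_vector_derivative A t *v h t - g t) (at t)"
  obtains L where "((\<lambda>r. T t r *v (P r *v h r)) \<longlongrightarrow> L) at_bot"
proof -
  define I where "I a = T t (- a) *v (P (- a) *v h (- a))" for a
  have "norm (I b - I a) \<le> K * \<beta> / \<alpha> * (\<mu> (- a) / \<mu> t) powr \<alpha>" if "- t \<le> a" "a \<le> b" for a b
    unfolding I_def using stable_increment_le[OF h, of "- b" "- a"] that
    by (simp add: norm_minus_commute)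
  moreover have "((\<lambda>a. K * \<beta> / \<alpha> * (\<mu> (- a) / \<mu> t) powr \<alpha>) \<longlongrightarrow> 0) at_top"
    using tendsto_mult[OF tendsto_const[of "K * \<beta> / \<alpha>"] mu_ratio_powr_tendsto_at_bot[OF mu_pos[of t]]]
    by (simp add: filterlim_at_bot_mirror)
  ultimately obtain L where "(I \<longlongrightarrow> L) at_top"
    by (rule Cauchy_modulus_imp_convergent_at_top)
  then show thesis
    by (intro that[of L]) (simp add: filterlim_at_bot_mirror I_def[abs_def])
qed

lemma unstable_tail_convergent:
  assumes h: "\<And>t. (h has_vector_derivative A t *v h t - g t) (at t)"
  obtains L where "((\<lambda>r. T t r *v (h r - P r *v h r)) \<longlongrightarrow> L) at_top"
proof -
  define I where "I r = T t r *v (h r - P r *v h r)" for r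
  have "norm (I b - I a) \<le> K * \<beta> / \<alpha> * (\<mu> a / \<mu> t) powr (- \<alpha>)" if "t \<le> a" "a \<le> b" for a b
    unfolding I_def using unstable_increment_le[OF h that] by (simp add: norm_minus_commute)
  moreover have "((\<lambda>a. K * \<beta> / \<alpha> * (\<mu> a / \<mu> t) powr (- \<alpha>)) \<longlongrightarrow> 0) at_top"
    using tendsto_mult[OF tendsto_const[of "K * \<beta> / \<alpha>"] mu_ratio_powr_tendsto_at_top[OF mu_pos[of t]]]
    by simp
  ultimately obtain L where "(I \<longlongrightarrow> L) at_top"
    by (rule Cauchy_modulus_imp_convergent_at_top)
  then show thesis
    by (intro that[of L]) (simp add: I_def[abs_def])
qed

lemma bounded_solution_exists:
  obtains h where "\<And>t. (h has_vector_derivative A t *v h t - g t) (at t)" and "bounded (range h)"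
proof -
  obtain h0 where h0: "\<And>t. (h0 has_vector_derivative A t *v h0 t - g t) (at t)"
    using solution_exists[OF g] by blast
  obtain LP where LP: "((\<lambda>r. T 0 r *v (P r *v h0 r)) \<longlongrightarrow> LP) at_bot"
    using stable_tail_convergent[OF h0] .
  obtain LQ where LQ: "((\<lambda>r. T 0 r *v (h0 r - P r *v h0 r)) \<longlongrightarrow> LQ) at_top"
    using unstable_tail_convergent[OF h0] .
  \<comment> \<open>stable part of LP plus unstable part of LQ: subtracting T(t,0)c cancels both limits\<close>
  define c where "c = P 0 *v LP + (LQ - P 0 *v LQ)"
  define h where "h t = h0 t - T t 0 *v c" for t
  have h: "(h has_vector_derivative A t *v h t - g t) (at t)" for t
    unfolding h_def
    using has_vector_derivative_diff[OF h0[of t] has_vector_derivative_evolution_apply[of 0 c t]]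
    by (simp add: algebra_simps)
  have "norm (h t) \<le> 2 * K * \<beta> / \<alpha>" for t
  proof (rule norm_solution_le_if_tails_vanish[OF h])
    have "((\<lambda>r. T t 0 *v (P 0 *v (T 0 r *v (P r *v h0 r) - c))) \<longlongrightarrow> T t 0 *v (P 0 *v (LP - c))) at_bot"
      by (intro bounded_linear.tendsto[OF matrix_vector_mul_bounded_linear] tendsto_diff LP tendsto_const)
    moreover have "P 0 *v (LP - c) = 0"
      by (simp add: c_def algebra_simps projection_idem)
    ultimately show "((\<lambda>r. T t r *v (P r *v h r)) \<longlongrightarrow> 0) at_bot"
      by (simp add: h_def stable_part_shift)
    have "((\<lambda>r. T t 0 *v ((T 0 r *v (h0 r - P r *v h0 r) - c) - P 0 *v (T 0 r *v (h0 r - P r *v h0 r) - c)))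
        \<longlongrightarrow> T t 0 *v ((LQ - c) - P 0 *v (LQ - c))) at_top"
      by (intro bounded_linear.tendsto[OF matrix_vector_mul_bounded_linear] tendsto_diff LQ tendsto_const)
    moreover have "(LQ - c) - P 0 *v (LQ - c) = 0"
      by (simp add: c_def algebra_simps projection_idem)
    ultimately show "((\<lambda>r. T t r *v (h r - P r *v h r)) \<longlongrightarrow> 0) at_top"
      by (simp add: h_def unstable_part_shift)
  qed
  then have "bounded (range h)"
    unfolding bounded_iff by blast
  with h show thesis
    by (rule that)
qed

end

lemma bounded_solution_unique:
  assumes h1: "\<And>t. (h1 has_vector_derivative A t *v h1 t - g t) (at t)" and "bounded (range h1)"
    and h2: "\<And>t. (h2 has_vector_derivative A t *v h2 t - g t) (at t)" and "bounded (range h2)"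
  shows "h1 = h2"
proof
  fix t
  have "norm (h1 t - h2 t) \<le> 2 * K * 0 / \<alpha>"
  proof (rule bounded_solution_norm_le[where g = "\<lambda>_. 0"])
    show "((\<lambda>t. h1 t - h2 t) has_vector_derivative A s *v (h1 s - h2 s) - 0) (at s)" for s
      using has_vector_derivative_diff[OF h1[of s] h2[of s]] by (simp add: algebra_simps)
    show "bounded (range (\<lambda>t. h1 t - h2 t))"
      using bounded_minus_comp[OF \<open>bounded (range h1)\<close> \<open>bounded (range h2)\<close>] .
  qed auto
  then show "h1 t = h2 t"
    by simp
qed

lemma ex1_bounded_solution:
  assumes g: "continuous_on UNIV g"
    and g_bound: "\<And>s. norm (g s) \<le> \<beta> * deriv \<mu> s / \<mu> s" and \<beta>: "\<beta> \<ge> 0"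
  shows "\<exists>!h. (\<forall>t. (h has_vector_derivative A t *v h t - g t) (at t)) \<and> bounded (range h)
           \<and> (\<forall>h. (\<forall>t. (h has_vector_derivative A t *v h t - g t) (at t)) \<and> bounded (range h)
                \<longrightarrow> (\<forall>t. norm (h t) \<le> 2 * K * \<beta> / \<alpha>))"
proof -
  obtain h where "\<And>t. (h has_vector_derivative A t *v h t - g t) (at t)" "bounded (range h)"
    using bounded_solution_exists[OF g g_bound \<beta>] by blast
  moreover have "\<forall>h. (\<forall>t. (h has_vector_derivative A t *v h t - g t) (at t)) \<and> bounded (range h)
      \<longrightarrow> (\<forall>t. norm (h t) \<le> 2 * K * \<beta> / \<alpha>)"
    using bounded_solution_norm_le[OF g g_bound \<beta>] by blast
  ultimately show ?thesis
    using bounded_solution_unique by (intro ex1I[of _ h]) blast+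
qed

end

theorem lemma3p2:
  fixes A :: "real \<Rightarrow> real^'n^'n"
    and T :: "real \<Rightarrow> real \<Rightarrow> real^'n^'n"
    and P :: "real \<Rightarrow> real^'n^'n"
    and \<mu> :: "real \<Rightarrow> real"
    and f :: "real \<Rightarrow> real^'n \<Rightarrow> real^'n"
    and X :: "real \<Rightarrow> real \<Rightarrow> real^'n \<Rightarrow> real^'n"
    and K \<alpha> \<beta> \<gamma> :: real
  assumes A_cont: "continuous_on UNIV A"
    and A_bdd: "bounded (range A)"
    and T_evol: "evolution_operator A T"
    and mu: "growth_rate \<mu>"
    and dich: "algebraic_dichotomy T \<mu> P K \<alpha>"
    and f_cont: "continuous_on UNIV (\<lambda>(t, x). f t x)"
    and beta: "\<beta> \<ge> 0" and gamma: "\<gamma> \<ge> 0"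
    and f_bound: "\<And>t x. norm (f t x) \<le> \<beta> * deriv \<mu> t / \<mu> t"
    and f_lip: "\<And>t x1 x2. norm (f t x1 - f t x2) \<le> \<gamma> * deriv \<mu> t / \<mu> t * norm (x1 - x2)"
    and small: "6 * K * \<gamma> / \<alpha> < 1"
    and X_init: "\<And>\<tau> \<xi>. X \<tau> \<tau> \<xi> = \<xi>"
    and X_sol: "\<And>\<tau> \<xi> t. ((\<lambda>t. X t \<tau> \<xi>) has_vector_derivative
                          (A t *v X t \<tau> \<xi> + f t (X t \<tau> \<xi>))) (at t)"
  shows "\<forall>\<tau> \<xi>. \<exists>!h :: real \<Rightarrow> real^'n.
           (\<forall>t. (h has_vector_derivative (A t *v h t - f t (X t \<tau> \<xi>))) (at t))
           \<and> bounded (range h)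
         \<and> (\<forall>h. (\<forall>t. (h has_vector_derivative (A t *v h t - f t (X t \<tau> \<xi>))) (at t))
                \<and> bounded (range h) \<longrightarrow> (\<forall>t. norm (h t) \<le> 2 * K * \<beta> / \<alpha>))"
proof -
  obtain M where "\<And>t v. norm (A t *v v) \<le> M * norm v"
    using bounded_range_imp_matrix_vector_bound[OF A_bdd] by blast
  then interpret dichotomic_linear_ode A T M P \<mu> K \<alpha>
    using T_evol mu dich by unfold_locales
  have forcing_cont: "continuous_on UNIV (\<lambda>t. f t (X t \<tau> \<xi>))" for \<tau> \<xi>
  proof -
    have "continuous_on UNIV (\<lambda>t. X t \<tau> \<xi>)"
      using has_vector_derivative_continuous[OF X_sol] by (simp add: continuous_at_imp_continuous_on)
    from continuous_on_compose[OF continuous_on_Pair[OF continuous_on_id this]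
        continuous_on_subset[OF f_cont subset_UNIV]]
    show ?thesis
      by (simp add: o_def)
  qed
  show ?thesis
    using ex1_bounded_solution[OF forcing_cont f_bound beta] by blast
qed

end
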